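(* For real $\alpha,\beta$, the inequalities $M_{\alpha }\left( 1,\cosh x;\tfrac{2}{3}\right) <\frac{\sinh x}{x}<M_{\beta }\left( 1,\cosh x;\tfrac{2}{3}\right)$ hold for all $x\in(0,\infty)$ if and only if $\alpha \leq 0$ and $\beta \geq 4/5$.
   Context: For $a,b>0$ and $w\in(0,1)$, the weighted power mean is $M_{r}(a,b;w)=\left( wa^{r}+(1-w) b^{r}\right)^{1/r}$ if $r\neq 0$ and $M_{0}(a,b;w)=a^{w}b^{1-w}$. *)

theory Defs
  imports Complex_Main
begin

definition power_mean :: "real \<Rightarrow> real \<Rightarrow> real \<Rightarrow> real \<Rightarrow> real" where
  "power_mean r a b w =
     (if r = 0 then a powr w * b powr (1 - w)
      else (w * a powr r + (1 - w) * b powr r) powr (1 / r))"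

end

theory Submission
  imports Defs "HOL-Analysis.Convex" "HOL-Real_Asymp.Real_Asymp"
begin

text \<open>Since \<open>M\<^sub>r\<close> increases with \<open>r\<close>, sufficiency reduces to the two extreme bounds
  \<open>cosh\<^sup>1\<^sup>/\<^sup>3 x = M\<^sub>0 < sinh x / x < M\<^sub>4\<^sub>/\<^sub>5\<close>. Each is proved by showing that the logarithm
  of the ratio of the two sides is increasing on \<open>(0, \<infinity>)\<close> tending to \<open>0\<close> at \<open>0\<close>.
  For \<open>M\<^sub>4\<^sub>/\<^sub>5\<close> the sign of the derivative reduces to
  \<open>2 cosh\<^sup>1\<^sup>/\<^sup>5 x (x cosh x - sinh x) < sinh x cosh x - x\<close>, proved in the same way; the sign
  of that derivative in turn reduces to \<open>x sinh 3x - 9/4 cosh 3x + 9/4 cosh x + 6x\<^sup>2 cosh x > 0\<close>,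
  whose Taylor coefficients are nonnegative.
  Necessity: for \<open>\<alpha> > 0\<close> one has \<open>M\<^sub>\<alpha> > 3\<^sup>-\<^sup>1\<^sup>/\<^sup>\<alpha> cosh x\<close>, which beats \<open>sinh x / x\<close> at
  \<open>x = 3\<^sup>1\<^sup>/\<^sup>\<alpha>\<close>; for \<open>0 < \<beta> < 4/5\<close> the expansion
  \<open>(sinh x / x)\<^sup>\<beta> - M\<^sub>\<beta>\<^sup>\<beta> = \<beta> (4 - 5\<beta>) x\<^sup>4 / 180 + o(x\<^sup>4)\<close> violates the upper bound near \<open>0\<close>,
  and for \<open>\<beta> \<le> 0\<close> already \<open>M\<^sub>\<beta> \<le> M\<^sub>0\<close> does.\<close>

lemma power_mean_le_geometric:
  assumes "r \<le> 0" "a > 0" "b > 0" "0 \<le> w" "w \<le> 1"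
  shows "power_mean r a b w \<le> a powr w * b powr (1 - w)"
proof (cases "r = 0")
  case False
  then have r: "r < 0" using assms(1) by simp
  have "(a powr w * b powr (1 - w)) powr r = (a powr r) powr w * (b powr r) powr (1 - w)"
    by (simp add: powr_mult powr_powr mult.commute)
  also have "\<dots> \<le> w * a powr r + (1 - w) * b powr r"
    using assms by (intro Youngs_inequality_0) auto
  finally have "(w * a powr r + (1 - w) * b powr r) powr (1 / r)
      \<le> ((a powr w * b powr (1 - w)) powr r) powr (1 / r)"
    using r assms by (intro powr_mono2') auto
  then show ?thesis using r by (simp add: power_mean_def powr_powr)
qed (simp add: power_mean_def)

lemma power_mean_mono:
  assumes "0 < p" "p \<le> q" "a > 0" "b > 0" "0 \<le> w" "w \<le> 1"
  shows "power_mean p a b w \<le> power_mean q a b w"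
proof -
  have "(w * a powr p + (1 - w) * b powr p) powr (q / p)
      \<le> w * (a powr p) powr (q / p) + (1 - w) * (b powr p) powr (q / p)"
    using convex_onD[OF powr_convex, of "q / p" "1 - w" "a powr p" "b powr p"] assms
    by simp
  also have "\<dots> = w * a powr q + (1 - w) * b powr q"
    using assms by (simp add: powr_powr)
  finally have "((w * a powr p + (1 - w) * b powr p) powr (q / p)) powr (1 / q)
      \<le> (w * a powr q + (1 - w) * b powr q) powr (1 / q)"
    using assms by (intro powr_mono2) auto
  then show ?thesis using assms by (simp add: power_mean_def powr_powr)
qed

lemma DERIV_pos_imp_gt_limit_at_right_0:
  fixes g g' :: "real \<Rightarrow> real"
  assumes deriv: "\<And>y. y > 0 \<Longrightarrow> (g has_real_derivative g' y) (at y)"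
    and pos: "\<And>y. y > 0 \<Longrightarrow> g' y > 0"
    and lim: "(g \<longlongrightarrow> L) (at_right 0)"
    and "x > 0"
  shows "g x > L"
proof -
  have mono: "g a < g b" if "0 < a" "a < b" for a b
  proof (rule DERIV_pos_imp_increasing[OF that(2)])
    fix y assume "a \<le> y" "y \<le> b"
    then show "\<exists>z. (g has_real_derivative z) (at y) \<and> z > 0"
      using that deriv pos by (meson less_le_trans)
  qed
  have ev: "\<forall>\<^sub>F y in at_right 0. g y \<le> g (x / 2)"
    using eventually_at_right_real[of 0 "x / 2"] \<open>x > 0\<close>
    by (auto elim!: eventually_mono intro!: less_imp_le mono)
  have "L \<le> g (x / 2)"
    by (rule tendsto_upperbound[OF lim ev]) simp
  also have "\<dots> < g x" using \<open>x > 0\<close> by (intro mono) auto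
  finally show ?thesis .
qed

lemma sinh_lt_mult_cosh:
  fixes x :: real
  assumes "x > 0"
  shows "sinh x < x * cosh x"
proof -
  have "x * cosh x - sinh x > 0"
  proof (rule DERIV_pos_imp_gt_limit_at_right_0[where g = "\<lambda>y. y * cosh y - sinh y"
        and g' = "\<lambda>y. y * sinh y"])
    show "((\<lambda>y. y * cosh y - sinh y) has_real_derivative y * sinh y) (at y)" for y :: real
      by (auto intro!: derivative_eq_intros)
  qed (use assms in \<open>auto intro!: tendsto_eq_intros simp: zero_less_mult_iff\<close>)
  then show ?thesis by simp
qed

lemma lt_sinh_mult_cosh:
  fixes x :: real
  assumes "x > 0"
  shows "x < sinh x * cosh x"
proof -
  have "sinh x * cosh x - x > 0"
  proof (rule DERIV_pos_imp_gt_limit_at_right_0[where g = "\<lambda>y. sinh y * cosh y - y"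
        and g' = "\<lambda>y. 2 * sinh y ^ 2"])
    show "((\<lambda>y. sinh y * cosh y - y) has_real_derivative 2 * sinh y ^ 2) (at y)" for y :: real
      using cosh_square_eq[of y] by (auto intro!: derivative_eq_intros simp: power2_eq_square)
  qed (use assms in \<open>auto intro!: tendsto_eq_intros simp: zero_less_mult_iff\<close>)
  then show ?thesis by simp
qed

lemma three_sinh_mult_cosh_lt:
  fixes x :: real
  assumes "x > 0"
  shows "3 * sinh x * cosh x < 2 * x * cosh x ^ 2 + x"
proof -
  have "2 * x * cosh x ^ 2 + x - 3 * sinh x * cosh x > 0"
  proof (rule DERIV_pos_imp_gt_limit_at_right_0
        [where g = "\<lambda>y. 2 * y * cosh y ^ 2 + y - 3 * sinh y * cosh y"
        and g' = "\<lambda>y. 4 * sinh y * (y * cosh y - sinh y)"])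
    show "((\<lambda>y. 2 * y * cosh y ^ 2 + y - 3 * sinh y * cosh y) has_real_derivative
        4 * sinh y * (y * cosh y - sinh y)) (at y)" for y :: real
      using cosh_square_eq[of y]
      by (auto intro!: derivative_eq_intros simp: algebra_simps power2_eq_square)
    show "4 * sinh y * (y * cosh y - sinh y) > 0" if "y > 0" for y :: real
      using that sinh_lt_mult_cosh[OF that] by simp
  qed (use assms in \<open>auto intro!: tendsto_eq_intros simp: zero_less_mult_iff\<close>)
  then show ?thesis by simp
qed

lemma exp_mult_sums: "(\<lambda>n. a ^ n * x ^ n / fact n) sums exp (a * x :: real)"
  using exp_converges[of "a * x"] by (simp add: power_mult_distrib divide_inverse mult.commute)

lemma mult_exp_mult_sums:
  "(\<lambda>n. real n * a ^ (n - 1) * x ^ n / fact n) sums (x * exp (a * x :: real))"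
proof -
  have "(\<lambda>n. x * (a ^ n * x ^ n / fact n)) sums (x * exp (a * x))"
    by (rule sums_mult[OF exp_mult_sums])
  also have "(\<lambda>n. x * (a ^ n * x ^ n / fact n))
      = (\<lambda>n. (\<lambda>n. real n * a ^ (n - 1) * x ^ n / fact n) (Suc n))"
    by (simp add: fun_eq_iff divide_simps)
  finally show ?thesis by (subst (asm) sums_Suc_iff) simp
qed

lemma power2_mult_exp_mult_sums:
  "(\<lambda>n. real n * (real n - 1) * a ^ (n - 2) * x ^ n / fact n) sums (x\<^sup>2 * exp (a * x :: real))"
proof -
  have "(\<lambda>n. x * (real n * a ^ (n - 1) * x ^ n / fact n)) sums (x * (x * exp (a * x)))"
    by (rule sums_mult[OF mult_exp_mult_sums])
  also have "(\<lambda>n. x * (real n * a ^ (n - 1) * x ^ n / fact n))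
      = (\<lambda>n. (\<lambda>n. real n * (real n - 1) * a ^ (n - 2) * x ^ n / fact n) (Suc n))"
    by (simp add: fun_eq_iff divide_simps)
  finally show ?thesis by (subst (asm) sums_Suc_iff) (simp add: power2_eq_square mult.assoc)
qed

lemma sums_pos_if_nonneg_coeffs:
  fixes c :: "nat \<Rightarrow> real"
  assumes "(\<lambda>n. c n * x ^ n / fact n) sums S"
    and "\<And>n. c n \<ge> 0" "c k > 0" "x > 0"
  shows "S > 0"
proof -
  have "0 < suminf (\<lambda>n. c n * x ^ n / fact n)"
    using assms by (subst suminf_pos_iff) (auto simp: sums_iff intro!: exI[of _ k])
  then show ?thesis using assms(1) by (simp add: sums_iff)
qed

text \<open>The Taylor coefficients of \<open>x sinh 3x - 9/4 cosh 3x + 9/4 cosh x + 6x\<^sup>2 cosh x\<close>, read off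
  from its expansion in \<open>x\<^sup>k e\<^sup>\<plusminus>\<^sup>x\<close> and \<open>x\<^sup>k e\<^sup>\<plusminus>\<^sup>3\<^sup>x\<close>; they vanish for odd \<open>n\<close> and for \<open>n < 8\<close>.\<close>
definition triple_coeff :: "nat \<Rightarrow> real" where
  "triple_coeff n =
     real n * 3 ^ (n - 1) / 2 - real n * (-3) ^ (n - 1) / 2 - 9/8 * 3 ^ n - 9/8 * (-3) ^ n
     + 9/8 + 9/8 * (-1) ^ n + 3 * real n * (real n - 1) + 3 * real n * (real n - 1) * (-1) ^ (n - 2)"

lemma triple_coeff_sums:
  fixes x :: real
  shows "(\<lambda>n. triple_coeff n * x ^ n / fact n) sums
    (x * sinh (3 * x) - 9/4 * cosh (3 * x) + 9/4 * cosh x + 6 * x\<^sup>2 * cosh x)"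
proof -
  have "(\<lambda>n. 1/2 * (real n * 3 ^ (n - 1) * x ^ n / fact n)
      - 1/2 * (real n * (-3) ^ (n - 1) * x ^ n / fact n)
      - 9/8 * (3 ^ n * x ^ n / fact n) - 9/8 * ((-3) ^ n * x ^ n / fact n)
      + 9/8 * (1 ^ n * x ^ n / fact n) + 9/8 * ((-1) ^ n * x ^ n / fact n)
      + 3 * (real n * (real n - 1) * 1 ^ (n - 2) * x ^ n / fact n)
      + 3 * (real n * (real n - 1) * (-1) ^ (n - 2) * x ^ n / fact n))
    sums (1/2 * (x * exp (3 * x)) - 1/2 * (x * exp ((-3) * x))
      - 9/8 * exp (3 * x) - 9/8 * exp ((-3) * x) + 9/8 * exp (1 * x) + 9/8 * exp ((-1) * x)
      + 3 * (x\<^sup>2 * exp (1 * x)) + 3 * (x\<^sup>2 * exp ((-1) * x)))"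
    by (intro sums_add sums_diff sums_mult exp_mult_sums mult_exp_mult_sums power2_mult_exp_mult_sums)
  moreover have "(\<lambda>n. 1/2 * (real n * 3 ^ (n - 1) * x ^ n / fact n)
      - 1/2 * (real n * (-3) ^ (n - 1) * x ^ n / fact n)
      - 9/8 * (3 ^ n * x ^ n / fact n) - 9/8 * ((-3) ^ n * x ^ n / fact n)
      + 9/8 * (1 ^ n * x ^ n / fact n) + 9/8 * ((-1) ^ n * x ^ n / fact n)
      + 3 * (real n * (real n - 1) * 1 ^ (n - 2) * x ^ n / fact n)
      + 3 * (real n * (real n - 1) * (-1) ^ (n - 2) * x ^ n / fact n))
    = (\<lambda>n. triple_coeff n * x ^ n / fact n)"
    by (simp add: fun_eq_iff triple_coeff_def add_divide_distrib diff_divide_distrib algebra_simps)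
  moreover have "x * sinh (3 * x) - 9/4 * cosh (3 * x) + 9/4 * cosh x + 6 * x\<^sup>2 * cosh x
    = 1/2 * (x * exp (3 * x)) - 1/2 * (x * exp ((-3) * x))
      - 9/8 * exp (3 * x) - 9/8 * exp ((-3) * x) + 9/8 * exp (1 * x) + 9/8 * exp ((-1) * x)
      + 3 * (x\<^sup>2 * exp (1 * x)) + 3 * (x\<^sup>2 * exp ((-1) * x))"
    by (simp add: sinh_def cosh_def field_simps)
  ultimately show ?thesis by simp
qed

lemma triple_coeff_nonneg: "triple_coeff n \<ge> 0"
proof (cases "n < 8")
  case True
  then have "n \<in> {0, 1, 2, 3, 4, 5, 6, 7}" by auto
  then show ?thesis by (auto simp: triple_coeff_def)
next
  case False
  define m where "m = n - 2"
  have n: "n = m + 2" using False by (simp add: m_def)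
  show ?thesis
  proof (cases "even m")
    case True
    then have "triple_coeff n = (real n - 27/4) * 3 ^ (m + 1) + 9/4 + 6 * real n * (real n - 1)"
      using n by (simp add: triple_coeff_def field_simps)
    also have "\<dots> \<ge> 0" using False by (intro add_nonneg_nonneg mult_nonneg_nonneg) auto
    finally show ?thesis .
  next
    case False
    then show ?thesis using n by (simp add: triple_coeff_def)
  qed
qed

lemma cosh_triple_bound:
  fixes x :: real
  assumes "x > 0"
  shows "9/4 * cosh (3 * x) < x * sinh (3 * x) + 9/4 * cosh x + 6 * x\<^sup>2 * cosh x"
proof -
  have "0 < x * sinh (3 * x) - 9/4 * cosh (3 * x) + 9/4 * cosh x + 6 * x\<^sup>2 * cosh x"
    by (rule sums_pos_if_nonneg_coeffs[OF triple_coeff_sums[of x] triple_coeff_nonneg, of 8])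
      (simp_all add: triple_coeff_def assms)
  then show ?thesis by simp
qed

lemma sinh_triple: "sinh (3 * x :: real) = 3 * sinh x + 4 * sinh x ^ 3"
proof -
  have "sinh (3 * x) = sinh (2 * x) * cosh x + cosh (2 * x) * sinh x"
    using sinh_add[of "2 * x" x] by simp
  also have "\<dots> = 2 * sinh x * cosh x ^ 2 + (cosh x ^ 2 + sinh x ^ 2) * sinh x"
    by (simp add: sinh_double cosh_double power2_eq_square)
  also have "\<dots> = 3 * sinh x + 4 * sinh x ^ 3"
    by (simp add: cosh_square_eq) (simp add: algebra_simps power2_eq_square power3_eq_cube)
  finally show ?thesis .
qed

lemma cosh_triple: "cosh (3 * x :: real) = 4 * cosh x ^ 3 - 3 * cosh x"
proof -
  have "cosh (3 * x) = cosh (2 * x) * cosh x + sinh (2 * x) * sinh x"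
    using cosh_add[of "2 * x" x] by simp
  also have "\<dots> = (cosh x ^ 2 + sinh x ^ 2) * cosh x + 2 * sinh x ^ 2 * cosh x"
    by (simp add: sinh_double cosh_double power2_eq_square)
  also have "\<dots> = 4 * cosh x ^ 3 - 3 * cosh x"
    by (simp add: sinh_square_eq) (simp add: algebra_simps power2_eq_square power3_eq_cube)
  finally show ?thesis .
qed

lemma cosh_powr_third_lt_sinh_div:
  fixes x :: real
  assumes "x > 0"
  shows "cosh x powr (1/3) < sinh x / x"
proof -
  have "ln (sinh x) - ln x - ln (cosh x) / 3 > 0"
  proof (rule DERIV_pos_imp_gt_limit_at_right_0
        [where g = "\<lambda>y. ln (sinh y) - ln y - ln (cosh y) / 3"
        and g' = "\<lambda>y. cosh y / sinh y - 1 / y - sinh y / (3 * cosh y)"])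
    fix y :: real
    assume y: "y > 0"
    show "((\<lambda>y. ln (sinh y) - ln y - ln (cosh y) / 3) has_real_derivative
        cosh y / sinh y - 1 / y - sinh y / (3 * cosh y)) (at y)"
      using y by (auto intro!: derivative_eq_intros)
    have "cosh y / sinh y - 1 / y - sinh y / (3 * cosh y)
        = (3 * y * cosh y ^ 2 - 3 * sinh y * cosh y - y * sinh y ^ 2) / (3 * y * sinh y * cosh y)"
      using y by (simp add: field_simps power2_eq_square)
    also have "3 * y * cosh y ^ 2 - 3 * sinh y * cosh y - y * sinh y ^ 2
        = 2 * y * cosh y ^ 2 + y - 3 * sinh y * cosh y"
      by (simp add: cosh_square_eq algebra_simps)
    finally show "cosh y / sinh y - 1 / y - sinh y / (3 * cosh y) > 0"
      using y three_sinh_mult_cosh_lt[OF y] by simp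
  next
    show "((\<lambda>y::real. ln (sinh y) - ln y - ln (cosh y) / 3) \<longlongrightarrow> 0) (at_right 0)"
      by real_asymp
  qed (rule assms)
  then have "ln (cosh x powr (1/3)) < ln (sinh x / x)"
    using assms by (simp add: ln_powr ln_div)
  moreover have "cosh x powr (1/3) > 0" "sinh x / x > 0" using assms by auto
  ultimately show ?thesis by (simp only: ln_less_cancel_iff)
qed

lemma cosh_powr_fifth_bound:
  fixes x :: real
  assumes "x > 0"
  shows "2 * cosh x powr (1/5) * (x * cosh x - sinh x) < sinh x * cosh x - x"
proof -
  define g where "g y = ln (sinh y * cosh y - y) - ln (y * cosh y - sinh y) - ln (cosh y) / 5"
    for y :: real
  define g' where "g' y = 2 * sinh y ^ 2 / (sinh y * cosh y - y)
      - y * sinh y / (y * cosh y - sinh y) - sinh y / (5 * cosh y)" for y :: real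
  have "g x > ln 2"
  proof (rule DERIV_pos_imp_gt_limit_at_right_0[where g = g and g' = g'])
    fix y :: real
    assume y: "y > 0"
    have A: "y * cosh y - sinh y > 0" and B: "sinh y * cosh y - y > 0"
      using sinh_lt_mult_cosh[OF y] lt_sinh_mult_cosh[OF y] by simp_all
    have "cosh y * cosh y + sinh y * sinh y - 1 = 2 * sinh y ^ 2"
      using cosh_square_eq[of y] by (simp add: power2_eq_square)
    then show "(g has_real_derivative g' y) (at y)"
      unfolding g_def g'_def using A B
      by (auto intro!: derivative_eq_intros)
    have "10 * cosh y * sinh y * (y * cosh y - sinh y) - 5 * y * cosh y * (sinh y * cosh y - y)
        - (sinh y * cosh y - y) * (y * cosh y - sinh y)
        = y * sinh (3 * y) - 9/4 * cosh (3 * y) + 9/4 * cosh y + 6 * y\<^sup>2 * cosh y"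
      unfolding sinh_triple cosh_triple using cosh_square_eq[of y] by algebra
    then have numerator: "10 * cosh y * sinh y * (y * cosh y - sinh y)
        - 5 * y * cosh y * (sinh y * cosh y - y) - (sinh y * cosh y - y) * (y * cosh y - sinh y) > 0"
      using cosh_triple_bound[OF y] by simp
    have "g' y * (5 * cosh y * (y * cosh y - sinh y) * (sinh y * cosh y - y))
        = sinh y * (10 * cosh y * sinh y * (y * cosh y - sinh y)
          - 5 * y * cosh y * (sinh y * cosh y - y) - (sinh y * cosh y - y) * (y * cosh y - sinh y))"
    proof -
      \<comment> \<open>stated for abstract \<open>a\<close>, \<open>b\<close> so that \<open>field_simps\<close> cancels the denominators\<close>
      have "(2 * s\<^sup>2 / b - y * s / a - s / (5 * c)) * (5 * c * a * b)
          = s * (10 * c * s * a - 5 * y * c * b - b * a)"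
        if "a \<noteq> 0" "b \<noteq> 0" "c \<noteq> 0" for a b c s :: real
        using that by (simp add: field_simps power2_eq_square)
      then show ?thesis unfolding g'_def using A B by (simp add: mult.assoc)
    qed
    moreover have "5 * cosh y * (y * cosh y - sinh y) * (sinh y * cosh y - y) > 0"
      using A B by simp
    ultimately show "g' y > 0"
      using numerator y by (metis diff_gt_0_iff_gt mult_pos_pos zero_less_mult_pos2 sinh_real_pos_iff)
  next
    show "(g \<longlongrightarrow> ln 2) (at_right 0)"
      unfolding g_def by real_asymp (simp add: ln_div)
  qed (rule assms)
  have A: "x * cosh x - sinh x > 0" and B: "sinh x * cosh x - x > 0"
    using sinh_lt_mult_cosh[OF assms] lt_sinh_mult_cosh[OF assms] by simp_all
  have "ln (2 * cosh x powr (1/5) * (x * cosh x - sinh x)) < ln (sinh x * cosh x - x)"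
    using \<open>g x > ln 2\<close> A by (simp add: g_def ln_mult ln_powr)
  then show ?thesis using A B by simp
qed

lemma sinh_div_lt_power_mean_4_5:
  fixes x :: real
  assumes "x > 0"
  shows "sinh x / x < power_mean (4/5) 1 (cosh x) (2/3)"
proof -
  define g where "g y = 5/4 * ln (2/3 + cosh y powr (4/5) / 3) - ln (sinh y) + ln y" for y :: real
  define g' where "g' y = sinh y / (cosh y powr (1/5) * (2 + cosh y powr (4/5)))
      - cosh y / sinh y + 1 / y" for y :: real
  have "g x > 0"
  proof (rule DERIV_pos_imp_gt_limit_at_right_0[where g = g and g' = g'])
    fix y :: real
    assume y: "y > 0"
    have "0 < 2/3 + cosh y powr (4/5) / 3" by (simp add: add_pos_nonneg)
    then show "(g has_real_derivative g' y) (at y)"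
      unfolding g_def g'_def using y
      by (auto intro!: derivative_eq_intros simp: powr_minus divide_simps)
    define w where "w = cosh y powr (1/5)"
    have "2 * w + cosh y > 0" by (simp add: w_def add_pos_pos)
    have "cosh y powr (1/5) * (2 + cosh y powr (4/5)) = 2 * w + cosh y"
      by (simp add: w_def distrib_left flip: powr_add)
    then have g': "g' y = sinh y / (2 * w + cosh y) - (y * cosh y - sinh y) / (y * sinh y)"
      unfolding g'_def using y by (simp add: field_simps)
    have "(y * cosh y - sinh y) * (2 * w + cosh y)
        = 2 * w * (y * cosh y - sinh y) + cosh y * (y * cosh y - sinh y)"
      by (simp add: algebra_simps)
    also have "\<dots> < (sinh y * cosh y - y) + cosh y * (y * cosh y - sinh y)"
      using cosh_powr_fifth_bound[OF y] by (simp add: w_def)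
    also have "\<dots> = y * sinh y * sinh y"
      using cosh_square_eq[of y] by (simp add: algebra_simps power2_eq_square)
    finally have "(y * cosh y - sinh y) / (y * sinh y) < sinh y / (2 * w + cosh y)"
      using y \<open>2 * w + cosh y > 0\<close> by (simp add: divide_simps mult.commute mult.left_commute)
    then show "g' y > 0" by (simp add: g')
  next
    show "(g \<longlongrightarrow> 0) (at_right 0)"
      unfolding g_def by real_asymp
  qed (rule assms)
  moreover have mean_pos: "2/3 + cosh x powr (4/5) / 3 > 0"
    by (simp add: add_pos_nonneg)
  ultimately have "ln (sinh x / x) < ln ((2/3 + cosh x powr (4/5) / 3) powr (5/4))"
    using assms by (simp add: g_def ln_div ln_powr)
  moreover have "sinh x / x > 0" "(2/3 + cosh x powr (4/5) / 3) powr (5/4) > 0"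
    using assms mean_pos by simp_all
  ultimately have "sinh x / x < (2/3 + cosh x powr (4/5) / 3) powr (5/4)"
    by (simp only: ln_less_cancel_iff)
  then show ?thesis by (simp add: power_mean_def)
qed

lemma power_mean_nonpos_lt_sinh_div:
  fixes x :: real
  assumes "\<alpha> \<le> 0" "x > 0"
  shows "power_mean \<alpha> 1 (cosh x) (2/3) < sinh x / x"
proof -
  have "power_mean \<alpha> 1 (cosh x) (2/3) \<le> cosh x powr (1/3)"
    using power_mean_le_geometric[of \<alpha> 1 "cosh x" "2/3"] assms(1) by simp
  also have "\<dots> < sinh x / x"
    by (rule cosh_powr_third_lt_sinh_div[OF assms(2)])
  finally show ?thesis .
qed

lemma sinh_div_lt_power_mean_ge_4_5:
  fixes x :: real
  assumes "\<beta> \<ge> 4/5" "x > 0"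
  shows "sinh x / x < power_mean \<beta> 1 (cosh x) (2/3)"
proof -
  have "sinh x / x < power_mean (4/5) 1 (cosh x) (2/3)"
    by (rule sinh_div_lt_power_mean_4_5[OF assms(2)])
  also have "\<dots> \<le> power_mean \<beta> 1 (cosh x) (2/3)"
    using assms(1) by (intro power_mean_mono) auto
  finally show ?thesis .
qed

lemma ex_sinh_div_le_power_mean_pos:
  assumes "\<alpha> > 0"
  shows "\<exists>x>0. sinh x / x \<le> power_mean \<alpha> 1 (cosh x) (2/3)"
proof (intro exI conjI)
  define x where "x = 3 powr (1 / \<alpha>)"
  show "x > 0" by (simp add: x_def)
  have "sinh x / x < cosh x / x"
    using \<open>x > 0\<close> by (simp add: divide_strict_right_mono sinh_less_cosh_real)
  also have "\<dots> = (cosh x powr \<alpha> / 3) powr (1 / \<alpha>)"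
    using assms by (simp add: x_def powr_divide powr_powr)
  also have "\<dots> < (2/3 + cosh x powr \<alpha> / 3) powr (1 / \<alpha>)"
    using assms by (intro powr_less_mono2) auto
  also have "\<dots> = power_mean \<alpha> 1 (cosh x) (2/3)"
    using assms by (simp add: power_mean_def)
  finally show "sinh x / x \<le> power_mean \<alpha> 1 (cosh x) (2/3)" by simp
qed

lemma ex_power_mean_lt_sinh_div_lt_4_5:
  assumes "\<beta> < 4/5"
  shows "\<exists>x>0. power_mean \<beta> 1 (cosh x) (2/3) < sinh x / x"
proof (cases "\<beta> \<le> 0")
  case True
  then show ?thesis
    using power_mean_nonpos_lt_sinh_div[of \<beta> 1] by (intro exI[of _ 1]) simp
next
  case False
  then have "\<beta> > 0" by simp
  have "((\<lambda>x::real. ((sinh x / x) powr \<beta> - 2/3 - cosh x powr \<beta> / 3) / x ^ 4)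
      \<longlongrightarrow> \<beta> * (4 - 5 * \<beta>) / 180) (at_right 0)"
    by real_asymp (simp add: field_simps)
  moreover have "\<beta> * (4 - 5 * \<beta>) / 180 > 0"
    using \<open>\<beta> > 0\<close> assms by simp
  ultimately have "\<forall>\<^sub>F x in at_right 0. ((sinh x / x) powr \<beta> - 2/3 - cosh x powr \<beta> / 3) / x ^ 4 > 0"
    by (rule order_tendstoD(1))
  then have "\<forall>\<^sub>F x in at_right 0. x > 0 \<and> 2/3 + cosh x powr \<beta> / 3 < (sinh x / x) powr \<beta>"
    using eventually_at_right_less[of 0]
    by eventually_elim (simp add: zero_less_divide_iff)
  then obtain x :: real where "x > 0" and x: "2/3 + cosh x powr \<beta> / 3 < (sinh x / x) powr \<beta>"
    using eventually_happens'[of "at_right (0::real)"] by auto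
  have "power_mean \<beta> 1 (cosh x) (2/3) = (2/3 + cosh x powr \<beta> / 3) powr (1 / \<beta>)"
    using \<open>\<beta> > 0\<close> by (simp add: power_mean_def)
  also have "\<dots> < ((sinh x / x) powr \<beta>) powr (1 / \<beta>)"
    using \<open>\<beta> > 0\<close> x by (intro powr_less_mono2) (auto simp: add_pos_nonneg)
  also have "\<dots> = sinh x / x"
    using \<open>\<beta> > 0\<close> \<open>x > 0\<close> by (simp add: powr_powr)
  finally show ?thesis using \<open>x > 0\<close> by blast
qed

theorem corollary4p4:
  fixes \<alpha> \<beta> :: real
  shows "(\<forall>x::real. x > 0 \<longrightarrow>
            power_mean \<alpha> 1 (cosh x) (2/3) < sinh x / x \<and>
            sinh x / x < power_mean \<beta> 1 (cosh x) (2/3))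
         \<longleftrightarrow> (\<alpha> \<le> 0 \<and> \<beta> \<ge> 4/5)"
proof
  assume bounds: "\<forall>x::real. x > 0 \<longrightarrow>
            power_mean \<alpha> 1 (cosh x) (2/3) < sinh x / x \<and>
            sinh x / x < power_mean \<beta> 1 (cosh x) (2/3)"
  show "\<alpha> \<le> 0 \<and> \<beta> \<ge> 4/5"
  proof
    show "\<alpha> \<le> 0"
      using ex_sinh_div_le_power_mean_pos[of \<alpha>] bounds by (meson not_le not_less)
    show "\<beta> \<ge> 4/5"
      using ex_power_mean_lt_sinh_div_lt_4_5[of \<beta>] bounds by (meson not_le order.asym)
  qed
next
  assume "\<alpha> \<le> 0 \<and> \<beta> \<ge> 4/5"
  then show "\<forall>x::real. x > 0 \<longrightarrow>
            power_mean \<alpha> 1 (cosh x) (2/3) < sinh x / x \<and>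
            sinh x / x < power_mean \<beta> 1 (cosh x) (2/3)"
    using power_mean_nonpos_lt_sinh_div sinh_div_lt_power_mean_ge_4_5 by blast
qed

end
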